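(* Starting from any game state $G$, all game paths starting at $G$ that follow the Split-First Strategy have the same length.
   Context: Fibonacci numbers are indexed by $F_1=1$, $F_2=2$, $F_{i+1}=F_i+F_{i-1}$. A game state is a finite multiset of Fibonacci numbers (tracked by index). The legal moves are: $C_1$: replace $F_1,F_1$ by $F_2$; for $i\ge 2$, $C_i$: replace $F_{i-1},F_i$ by $F_{i+1}$ (a "combining move"); $S_2$: replace $F_2,F_2$ by $F_1,F_3$; for $i\ge 3$, $S_i$: replace $F_i,F_i$ by $F_{i-2},F_{i+1}$ (a "splitting move"). Here $C_1$ is grouped with the splitting moves, and "combining move" means $C_i$ with $i\ge 2$. Every sequence of legal moves is finite. A game path from a state $G$ is a sequence of legal moves starting at $G$ and continuing until no legal move is available; its length is its number of moves. A game path follows the Split-First Strategy if at each state along it: whenever some splitting move or $C_1$ is available, the move taken is one of those (any choice); otherwise the move taken is the combining move $C_i$ ($i\ge 2$) with the smallest index $i$ among those available. *)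

theory Defs
  imports Main "HOL-Library.Multiset"
begin

text \<open>A game state is a finite multiset of Fibonacci indices (each index \<ge> 1).
  Moves: C i (i \<ge> 1) and S i (i \<ge> 2).\<close>

datatype move = C nat | S nat

definition legal :: "nat multiset \<Rightarrow> move \<Rightarrow> bool" where
  "legal G m = (case m of
      C i \<Rightarrow> (i = 1 \<and> count G 1 \<ge> 2) \<or> (i \<ge> 2 \<and> count G (i - 1) \<ge> 1 \<and> count G i \<ge> 1)
    | S i \<Rightarrow> i \<ge> 2 \<and> count G i \<ge> 2)"

definition apply_move :: "nat multiset \<Rightarrow> move \<Rightarrow> nat multiset" where
  "apply_move G m = (case m of
      C i \<Rightarrow> (if i = 1 then G - {#1, 1#} + {#2#} else G - {#i - 1, i#} + {#i + 1#})
    | S i \<Rightarrow> (if i = 2 then G - {#2, 2#} + {#1, 3#} else G - {#i, i#} + {#i - 2, i + 1#}))"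

definition is_split :: "move \<Rightarrow> bool" where
  "is_split m = (case m of C i \<Rightarrow> i = 1 | S i \<Rightarrow> True)"

definition terminal :: "nat multiset \<Rightarrow> bool" where
  "terminal G = (\<not> (\<exists>m. legal G m))"

fun game_path :: "nat multiset \<Rightarrow> move list \<Rightarrow> bool" where
  "game_path G [] = terminal G"
| "game_path G (m # ms) = (legal G m \<and> game_path (apply_move G m) ms)"

fun split_first :: "nat multiset \<Rightarrow> move list \<Rightarrow> bool" where
  "split_first G [] = True"
| "split_first G (m # ms) =
     ((if \<exists>m'. legal G m' \<and> is_split m' then is_split m
       else m = C (LEAST i. i \<ge> 2 \<and> legal G (C i)))
      \<and> split_first (apply_move G m) ms)"

end

theory Submission
  imports Defs
begin

text \<open>
  Two distinct moves that the Split-First Strategy allows in the same state are both splitting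
  moves (or \<open>C\<^sub>1\<close>): without a legal splitting move the strategy prescribes a single combining
  move. Distinct splitting moves consume disjoint pairs \<open>F\<^sub>i, F\<^sub>i\<close> and \<open>F\<^sub>j, F\<^sub>j\<close>, so each stays
  legal after the other and the two orders lead to the same state. Thus the Split-First moves
  form a labelled system with the diamond property, and in such a system any partial run extends
  to a complete run as long as any given complete run; hence all complete runs have equal length.
\<close>

locale labelled_diamond =
  fixes step :: "'s \<Rightarrow> 'm \<Rightarrow> bool" and succ :: "'s \<Rightarrow> 'm \<Rightarrow> 's"
  assumes diamond: "\<lbrakk>step s a; step s b; a \<noteq> b\<rbrakk> \<Longrightarrow>
    step (succ s a) b \<and> succ (succ s b) a = succ (succ s a) b"
begin

fun run :: "'s \<Rightarrow> 'm list \<Rightarrow> bool" where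
  "run s [] = True"
| "run s (m # ms) = (step s m \<and> run (succ s m) ms)"

fun complete_run :: "'s \<Rightarrow> 'm list \<Rightarrow> bool" where
  "complete_run s [] = (\<forall>m. \<not> step s m)"
| "complete_run s (m # ms) = (step s m \<and> complete_run (succ s m) ms)"

lemma complete_run_append:
  "complete_run s (xs @ ys) = (run s xs \<and> complete_run (foldl succ s xs) ys)"
  by (induction xs arbitrary: s) auto

lemma run_extends_to_complete_run:
  assumes "complete_run s p" and "run s ms"
  shows "\<exists>e. complete_run s (ms @ e) \<and> length (ms @ e) = length p"
  using assms
proof (induction "length p" arbitrary: s p ms)
  case 0
  then show ?case by (cases ms) auto
next
  case (Suc n)
  show ?case
  proof (cases ms)
    case Nil
    then show ?thesis using Suc.prems by auto
  next
    case (Cons b r)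
    from Suc.hyps(2) Suc.prems(1) obtain a p' where
      p: "p = a # p'" and a: "step s a" and p': "complete_run (succ s a) p'" "length p' = n"
      by (cases p) auto
    have b: "step s b" and r: "run (succ s b) r" using Suc.prems(2) Cons by auto
    have "\<exists>e. complete_run (succ s b) (r @ e) \<and> length (r @ e) = n"
    proof (cases "a = b")
      case True
      then show ?thesis using Suc.hyps(1) p' r by auto
    next
      case False
      have ba: "step (succ s b) a"
        using diamond[OF b a] False by blast
      have eq: "succ (succ s b) a = succ (succ s a) b"
        using diamond[OF a b False] by blast
      obtain t where t: "complete_run (succ s a) (b # t)" "length (b # t) = n"
        using Suc.hyps(1)[of p' "succ s a" "[b]"] p' diamond[OF a b False] by auto
      then have "complete_run (succ s b) (a # t)" "length (a # t) = n"
        using ba eq by auto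
      then show ?thesis using Suc.hyps(1) r by metis
    qed
    then show ?thesis using Cons b Suc.hyps(2) by auto
  qed
qed

theorem complete_runs_same_length:
  assumes "complete_run s p" and "complete_run s q"
  shows "length p = length q"
proof -
  obtain e where e: "complete_run s (q @ e)" "length (q @ e) = length p"
    using run_extends_to_complete_run[OF assms(1)] assms(2) complete_run_append[of s q "[]"]
    by auto
  have "e = []"
    using e(1) assms(2) complete_run_append[of s q e] complete_run_append[of s q "[]"]
    by (cases e) auto
  then show ?thesis using e(2) by simp
qed

end

fun consumed :: "move \<Rightarrow> nat multiset" where
  "consumed (C i) = (if i = 1 then {#1, 1#} else {#i - 1, i#})"
| "consumed (S i) = {#i, i#}"

fun produced :: "move \<Rightarrow> nat multiset" where
  "produced (C i) = {#i + 1#}"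
| "produced (S i) = (if i = 2 then {#1, 3#} else {#i - 2, i + 1#})"

fun well_indexed :: "move \<Rightarrow> bool" where
  "well_indexed (C i) = (i \<ge> 1)"
| "well_indexed (S i) = (i \<ge> 2)"

lemma apply_move_eq: "apply_move G m = G - consumed m + produced m"
  by (cases m) (auto simp: apply_move_def)

lemma pair_subseteq_iff:
  "{#x, y#} \<subseteq># G \<longleftrightarrow> (if x = y then 2 \<le> count G x else 1 \<le> count G x \<and> 1 \<le> count G y)"
  by (auto simp: insert_subset_eq_iff in_diff_count Suc_le_eq simp flip: count_greater_zero_iff)

lemma legal_iff_consumed_subseteq: "legal G m \<longleftrightarrow> well_indexed m \<and> consumed m \<subseteq># G"
  by (cases m) (auto simp: legal_def pair_subseteq_iff)

lemma rewrites_commute: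
  assumes "X1 + X2 \<subseteq># G"
  shows "X2 \<subseteq># G - X1 + Y1" and "G - X1 + Y1 - X2 + Y2 = G - X2 + Y2 - X1 + Y1"
proof -
  have bound: "count X1 a + count X2 a \<le> count G a" for a
    using mset_subset_eq_count[OF assms, of a] by simp
  have "count X2 a \<le> count (G - X1 + Y1) a" for a
    using bound[of a] by simp
  then show "X2 \<subseteq># G - X1 + Y1"
    by (simp add: subseteq_mset_def)
  have "count (G - X1 + Y1 - X2 + Y2) a = count (G - X2 + Y2 - X1 + Y1) a" for a
    using bound[of a] by simp
  then show "G - X1 + Y1 - X2 + Y2 = G - X2 + Y2 - X1 + Y1"
    by (simp add: multiset_eq_iff)
qed

lemma legal_moves_commute:
  assumes "legal G a" "legal G b" "consumed a + consumed b \<subseteq># G"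
  shows "legal (apply_move G a) b \<and> apply_move (apply_move G b) a = apply_move (apply_move G a) b"
  using assms rewrites_commute[of "consumed a" "consumed b" G]
  by (auto simp: legal_iff_consumed_subseteq apply_move_eq)

lemma double_pairs_subseteq:
  "i \<noteq> j \<Longrightarrow> 2 \<le> count G i \<Longrightarrow> 2 \<le> count G j \<Longrightarrow> {#i, i, j, j#} \<subseteq># G"
  by (auto simp: subseteq_mset_def)

lemma distinct_splitting_moves_disjoint:
  assumes "is_split a" "is_split b" "legal G a" "legal G b" "a \<noteq> b"
  shows "consumed a + consumed b \<subseteq># G"
  using assms by (cases a; cases b) (auto simp: is_split_def legal_def intro!: double_pairs_subseteq)

definition split_first_move :: "nat multiset \<Rightarrow> move \<Rightarrow> bool" where
  "split_first_move G m \<longleftrightarrow> legal G m \<and>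
     (if \<exists>m'. legal G m' \<and> is_split m' then is_split m
      else m = C (LEAST i. i \<ge> 2 \<and> legal G (C i)))"

lemma distinct_split_first_moves_are_splitting:
  assumes "split_first_move G a" "split_first_move G b" "a \<noteq> b"
  shows "is_split a \<and> is_split b"
  using assms by (auto simp: split_first_move_def split: if_splits)

interpretation split_first_game: labelled_diamond split_first_move apply_move
proof
  fix G a b
  assume a: "split_first_move G a" and b: "split_first_move G b" and "a \<noteq> b"
  then have "is_split a" "is_split b"
    using distinct_split_first_moves_are_splitting by blast+
  moreover have "legal G a" "legal G b"
    using a b by (auto simp: split_first_move_def)
  ultimately have "legal (apply_move G a) b \<and>
      apply_move (apply_move G b) a = apply_move (apply_move G a) b"
    using legal_moves_commute distinct_splitting_moves_disjoint \<open>a \<noteq> b\<close> by blast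
  moreover have "split_first_move (apply_move G a) b" if "legal (apply_move G a) b"
    using that \<open>is_split b\<close> by (auto simp: split_first_move_def)
  ultimately show "split_first_move (apply_move G a) b \<and>
      apply_move (apply_move G b) a = apply_move (apply_move G a) b"
    by blast
qed

lemma split_first_game_path_is_complete_run:
  "game_path G ms \<Longrightarrow> split_first G ms \<Longrightarrow> split_first_game.complete_run G ms"
  by (induction ms arbitrary: G)
    (auto simp: terminal_def split_first_move_def split_first_game.complete_run.simps)

theorem lemma2p2:
  fixes G :: "nat multiset" and ms1 ms2 :: "move list"
  assumes "\<forall>i \<in># G. i \<ge> 1"
    and "game_path G ms1" and "split_first G ms1"
    and "game_path G ms2" and "split_first G ms2"
  shows "length ms1 = length ms2"
  using split_first_game.complete_runs_same_length split_first_game_path_is_complete_run assms(2-5)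
  by blast

end
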